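(* Let $F$ be a distribution on $[0,\infty)$ with unbounded support. If $0<\hat\gamma<\infty$ and $\varphi(\hat\gamma)<\infty$, then $$\liminf_{x\to\infty}\frac{\overline{F*F}(x)}{\overline{F}(x)}\le 2\varphi(\hat\gamma)\quad\text{and}\quad\limsup_{x\to\infty}\frac{\overline{F*F}(x)}{\overline{F}(x)}\ge 2\varphi(\hat\gamma).$$
   Context: $\overline{F}(x)=F(x,\infty)$, positive for all $x$; $\varphi(\gamma)=\int_0^\infty e^{\gamma x}F(dx)\in(0,\infty]$; $\hat\gamma=\sup\{\gamma:\varphi(\gamma)<\infty\}$. *)

theory Defs
  imports "HOL-Probability.Probability"
begin

definition tail :: "real measure \<Rightarrow> real \<Rightarrow> real" where
  "tail F x = measure F {x<..}"

definition mgf :: "real measure \<Rightarrow> real \<Rightarrow> ennreal" where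
  "mgf F g = (\<integral>\<^sup>+ x. ennreal (exp (g * x)) \<partial>F)"

definition gamma_hat :: "real measure \<Rightarrow> ereal" where
  "gamma_hat F = Sup {ereal g | g. mgf F g < \<infinity>}"

end

theory Submission
  imports Defs
begin

(* Write g for gamma-hat, phi for phi(g) and G for F*F. If W(s) = \<integral>_{u<s} w(u) du with w >= 0,
   Tonelli gives \<integral> W dM = \<integral> w(u) M(u,oo) du, so an eventual inequality between the tails of G
   and F becomes an inequality between \<integral> W dG and \<integral> W dF.

   Limsup: suppose Gbar <= c Fbar eventually, with c < 2 phi. Take W(s) = (e^(g s) - e^(g a))^+.
   Since W(x+y) >= e^(g x) W(y) for x >= 0 and W vanishes below a, \<integral> W dG >= 2 m \<integral> W dF with
   m = \<integral>_{x<=A} e^(g x) dF for any A <= a. Choosing A with m > c/2 contradicts \<integral> W dG <= c \<integral> W dF.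

   Liminf: suppose Gbar >= c Fbar eventually, with c = 2 phi + d and d > 0. Take the
   submultiplicative H(s) = e^(g s + l min(max(s,0),T)) and W = H - e^(g s). With A = \<integral> H dF
   this gives c (A - phi) <= A^2 - phi^2 + eps(l), where eps(l) -> 0 as l -> 0. As phi(g + l) is
   infinite, A increases to infinity with T, by a factor of at most e^(l h) when T grows by h;
   so T can be chosen with A - phi in [d/4, 3d/4]. But then
   c (A - phi) - (A^2 - phi^2) = (A - phi)(d - (A - phi)) >= 3d^2/16, a contradiction. *)

section \<open>Tails and weighted integrals\<close>

lemma real_distribution_convolution:
  assumes "real_distribution M" "real_distribution N"
  shows "real_distribution (M \<star> N)"
proof -
  interpret M: real_distribution M by fact
  interpret N: real_distribution N by fact
  interpret pair_prob_space M N ..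
  show ?thesis
    unfolding real_distribution_def real_distribution_axioms_def convolution_def
    by (auto intro!: prob_space_distr)
qed

lemma scaled_tail_le_imp_emeasure_le:
  assumes "finite_measure M" "finite_measure N" "0 \<le> a" "0 \<le> b"
    and "a * tail M u \<le> b * tail N u"
  shows "ennreal a * emeasure M {u<..} \<le> ennreal b * emeasure N {u<..}"
  using assms by (simp add: tail_def finite_measure.emeasure_eq_measure flip: ennreal_mult)

lemma borel_measurable_emeasure_greaterThan:
  fixes M :: "real measure"
  assumes "sigma_finite_measure M" and [measurable_cong]: "sets M = sets borel"
  shows "(\<lambda>u. emeasure M {u<..}) \<in> borel_measurable borel"
proof -
  interpret sigma_finite_measure M by fact
  have "Measurable.pred (borel \<Otimes>\<^sub>M M) (\<lambda>p::real \<times> real. fst p < snd p)"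
    by measurable
  then have "{p. fst p < snd p} \<in> sets (borel \<Otimes>\<^sub>M M)"
    using sets_eq_imp_space_eq[OF assms(2)] by (simp add: pred_def space_pair_measure)
  from measurable_emeasure_Pair[OF this] show ?thesis
    by (simp add: vimage_def greaterThan_def)
qed

lemma nn_integral_weighted_tail:
  fixes M :: "real measure" and w :: "real \<Rightarrow> ennreal"
  assumes "sigma_finite_measure M" and [measurable_cong]: "sets M = sets borel"
    and [measurable]: "w \<in> borel_measurable borel"
  shows "(\<integral>\<^sup>+u. w u * emeasure M {u<..} \<partial>lborel)
       = (\<integral>\<^sup>+s. (\<integral>\<^sup>+u. w u * indicator {..<s} u \<partial>lborel) \<partial>M)"
proof -
  interpret pair_sigma_finite lborel M
    using assms(1) by (intro pair_sigma_finite.intro) (auto simp: lborel.sigma_finite_measure_axioms)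
  have "(\<integral>\<^sup>+u. w u * emeasure M {u<..} \<partial>lborel)
      = (\<integral>\<^sup>+u. (\<integral>\<^sup>+s. w u * indicator {..<s} u \<partial>M) \<partial>lborel)"
    by (intro nn_integral_cong) (simp add: nn_integral_cmult_indicator[symmetric] indicator_def)
  also have "\<dots> = (\<integral>\<^sup>+s. (\<integral>\<^sup>+u. w u * indicator {..<s} u \<partial>lborel) \<partial>M)"
  proof -
    have "(\<lambda>p. w (fst p) * indicator {p. fst p < snd p} p) \<in> borel_measurable (lborel \<Otimes>\<^sub>M M)"
      by measurable
    then have "(\<lambda>p. w (fst p) * indicator {..<snd p} (fst p)) \<in> borel_measurable (lborel \<Otimes>\<^sub>M M)"
      by (simp add: indicator_def)
    from Fubini[OF this] show ?thesis
      by simp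
  qed
  finally show ?thesis .
qed

lemma nn_integral_weighted_tail_le:
  fixes M N :: "real measure" and w W :: "real \<Rightarrow> ennreal"
  assumes "finite_measure M" "subprob_space N"
    and [measurable_cong]: "sets M = sets borel" "sets N = sets borel"
    and [measurable]: "w \<in> borel_measurable borel"
    and W: "\<And>s. (\<integral>\<^sup>+u. w u * indicator {..<s} u \<partial>lborel) = W s"
    and tails: "\<And>u. x0 \<le> u \<Longrightarrow> a * emeasure N {u<..} \<le> b * emeasure M {u<..}"
  shows "a * (\<integral>\<^sup>+s. W s \<partial>N) \<le> a * W x0 + b * (\<integral>\<^sup>+s. W s \<partial>M)"
proof -
  interpret M: finite_measure M by fact
  interpret N: subprob_space N by fact
  have [measurable]: "(\<lambda>u. emeasure M {u<..}) \<in> borel_measurable borel"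
    "(\<lambda>u. emeasure N {u<..}) \<in> borel_measurable borel"
    by (rule borel_measurable_emeasure_greaterThan[OF M.sigma_finite_measure assms(3)],
        rule borel_measurable_emeasure_greaterThan[OF N.sigma_finite_measure assms(4)])
  have tail_N: "(\<integral>\<^sup>+u. w u * emeasure N {u<..} \<partial>lborel) = (\<integral>\<^sup>+s. W s \<partial>N)"
    and tail_M: "(\<integral>\<^sup>+u. w u * emeasure M {u<..} \<partial>lborel) = (\<integral>\<^sup>+s. W s \<partial>M)"
    using nn_integral_weighted_tail[OF N.sigma_finite_measure assms(4,5)]
      nn_integral_weighted_tail[OF M.sigma_finite_measure assms(3,5)]
    by (simp_all add: W)
  have "a * (\<integral>\<^sup>+s. W s \<partial>N) = (\<integral>\<^sup>+u. a * (w u * emeasure N {u<..}) \<partial>lborel)"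
    by (simp add: tail_N[symmetric] nn_integral_cmult)
  also have "\<dots> \<le> (\<integral>\<^sup>+u. a * (w u * indicator {..<x0} u) + b * (w u * emeasure M {u<..}) \<partial>lborel)"
  proof (rule nn_integral_mono)
    fix u :: real
    show "a * (w u * emeasure N {u<..}) \<le> a * (w u * indicator {..<x0} u) + b * (w u * emeasure M {u<..})"
    proof (cases "u < x0")
      case True
      have "emeasure N {u<..} \<le> indicator {..<x0} u"
        using True N.subprob_emeasure_le_1 by simp
      then have "a * (w u * emeasure N {u<..}) \<le> a * (w u * indicator {..<x0} u)"
        by (rule mult_left_mono[OF mult_left_mono]) auto
      then show ?thesis
        by (rule add_increasing2[OF zero_le])
    next
      case False
      then have "w u * (a * emeasure N {u<..}) \<le> w u * (b * emeasure M {u<..})"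
        using tails[of u] by (intro mult_left_mono) auto
      then have "a * (w u * emeasure N {u<..}) \<le> b * (w u * emeasure M {u<..})"
        by (simp add: mult.left_commute)
      then show ?thesis
        by (rule add_increasing[OF zero_le])
    qed
  qed
  also have "\<dots> = a * W x0 + b * (\<integral>\<^sup>+s. W s \<partial>M)"
    by (simp add: nn_integral_add nn_integral_cmult W tail_M[symmetric])
  finally show ?thesis .
qed

lemma has_real_derivative_min_const:
  fixes u b :: real
  assumes "u \<noteq> b"
  shows "((\<lambda>x. min x b) has_real_derivative (if u < b then 1 else 0)) (at u)"
proof (cases "u < b")
  case True
  show ?thesis
    by (rule has_field_derivative_transform_within_open[of "\<lambda>x. x" _ _ "{..<b}"])
       (use True in \<open>auto intro: derivative_eq_intros\<close>)
next
  case False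
  show ?thesis
    by (rule has_field_derivative_transform_within_open[of "\<lambda>x. b" _ _ "{b<..}"])
       (use False assms in \<open>auto intro: derivative_eq_intros\<close>)
qed

lemma nn_integral_lessThan_FTC:
  fixes W w :: "real \<Rightarrow> real"
  assumes "finite S" and "continuous_on UNIV W"
    and deriv: "\<And>u. u \<notin> S \<Longrightarrow> (W has_real_derivative w u) (at u)"
    and nonneg: "\<And>u. 0 \<le> w u"
    and below: "\<And>u. u < a \<Longrightarrow> w u = 0" "\<And>u. u \<le> a \<Longrightarrow> W u = 0"
  shows "(\<integral>\<^sup>+u. ennreal (w u) * indicator {..<s} u \<partial>lborel) = ennreal (W s)"
proof (cases "s \<le> a")
  case True
  then have "(\<lambda>u. ennreal (w u) * indicator {..<s} u) = (\<lambda>u. 0)"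
    using below by (force simp: indicator_def)
  then show ?thesis
    using True below by simp
next
  case False
  have "(\<integral>\<^sup>+u. ennreal (w u) * indicator {..<s} u \<partial>lborel)
      = (\<integral>\<^sup>+u. ennreal (w u) * indicator {a..s} u \<partial>lborel)"
    by (intro nn_integral_cong_AE eventually_mono[OF AE_lborel_singleton[of s]])
       (auto simp: indicator_def below)
  also have "\<dots> = ennreal (W s - W a)"
  proof (rule nn_integral_has_integral_lebesgue')
    show "(w has_integral W s - W a) {a..s}"
      using False deriv \<open>finite S\<close> continuous_on_subset[OF \<open>continuous_on UNIV W\<close>]
      by (intro fundamental_theorem_of_calculus_strong[of S])
         (auto simp: has_real_derivative_iff_has_vector_derivative)
  qed (rule nonneg)
  finally show ?thesis
    using below by simp
qed

lemma mgf_convolution: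
  fixes M N :: "real measure"
  assumes "finite_measure M" "finite_measure N"
    and [measurable_cong]: "sets M = sets borel" "sets N = sets borel"
  shows "mgf (M \<star> N) g = mgf M g * mgf N g"
proof -
  have "mgf (M \<star> N) g = (\<integral>\<^sup>+x. \<integral>\<^sup>+y. ennreal (exp (g * x)) * ennreal (exp (g * y)) \<partial>N \<partial>M)"
    unfolding mgf_def using assms
    by (subst nn_integral_convolution)
       (auto simp: distrib_left exp_add ennreal_mult intro!: nn_integral_cong)
  also have "\<dots> = mgf M g * mgf N g"
    unfolding mgf_def by (simp add: nn_integral_cmult nn_integral_multc)
  finally show ?thesis .
qed

lemma nn_integral_convolution_le_submultiplicative:
  fixes M N :: "real measure" and H :: "real \<Rightarrow> ennreal"
  assumes "finite_measure M" "finite_measure N" "sets M = sets borel" "sets N = sets borel"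
    and [measurable]: "H \<in> borel_measurable borel"
    and submult: "\<And>x y. H (x + y) \<le> H x * H y"
  shows "(\<integral>\<^sup>+z. H z \<partial>(M \<star> N)) \<le> (\<integral>\<^sup>+x. H x \<partial>M) * (\<integral>\<^sup>+y. H y \<partial>N)"
proof -
  have "(\<integral>\<^sup>+z. H z \<partial>(M \<star> N)) = (\<integral>\<^sup>+x. \<integral>\<^sup>+y. H (x + y) \<partial>N \<partial>M)"
    using assms by (intro nn_integral_convolution) auto
  also have "\<dots> \<le> (\<integral>\<^sup>+x. \<integral>\<^sup>+y. H x * H y \<partial>N \<partial>M)"
    by (intro nn_integral_mono submult)
  also have "\<dots> = (\<integral>\<^sup>+x. H x \<partial>M) * (\<integral>\<^sup>+y. H y \<partial>N)"
    using assms(3,4) by (simp add: nn_integral_cmult nn_integral_multc)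
  finally show ?thesis .
qed

lemma nn_integral_convolution_ge_superadditive:
  fixes M :: "real measure" and E V :: "real \<Rightarrow> ennreal"
  assumes "finite_measure M" "sets M = sets borel" "AE x in M. 0 \<le> x"
    and [measurable]: "E \<in> borel_measurable borel" "V \<in> borel_measurable borel"
    and superadd: "\<And>x y. 0 \<le> x \<Longrightarrow> 0 \<le> y \<Longrightarrow> E x * V y + E y * V x \<le> V (x + y)"
  shows "2 * ((\<integral>\<^sup>+x. E x \<partial>M) * (\<integral>\<^sup>+y. V y \<partial>M)) \<le> (\<integral>\<^sup>+z. V z \<partial>(M \<star> M))"
proof -
  have [measurable_cong]: "sets M = sets borel" by fact
  have "2 * ((\<integral>\<^sup>+x. E x \<partial>M) * (\<integral>\<^sup>+y. V y \<partial>M)) = (\<integral>\<^sup>+x. \<integral>\<^sup>+y. E x * V y + E y * V x \<partial>M \<partial>M)"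
    by (simp add: nn_integral_add nn_integral_cmult nn_integral_multc mult_2 mult.commute)
  also have "\<dots> \<le> (\<integral>\<^sup>+x. \<integral>\<^sup>+y. V (x + y) \<partial>M \<partial>M)"
    using assms(3)
  proof (intro nn_integral_mono_AE, eventually_elim)
    case (elim x)
    show ?case
      using assms(3) by (intro nn_integral_mono_AE) (auto elim!: eventually_mono intro!: superadd elim)
  qed
  also have "\<dots> = (\<integral>\<^sup>+z. V z \<partial>(M \<star> M))"
    using assms by (intro nn_integral_convolution[symmetric]) auto
  finally show ?thesis .
qed

lemma ex_less_nn_integral_indicator_atMost:
  fixes M :: "real measure" and f :: "real \<Rightarrow> ennreal"
  assumes [measurable_cong]: "sets M = sets borel" and [measurable]: "f \<in> borel_measurable borel"
    and "y < (\<integral>\<^sup>+x. f x \<partial>M)"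
  shows "\<exists>A. y < (\<integral>\<^sup>+x. f x * indicator {..A} x \<partial>M)"
proof -
  have "(\<integral>\<^sup>+x. f x \<partial>M) = (\<integral>\<^sup>+x. (SUP n. f x * indicator {..real n} x) \<partial>M)"
  proof (rule nn_integral_cong)
    fix x :: real
    obtain n :: nat where "x \<le> real n"
      using real_arch_simple by blast
    then show "f x = (SUP n. f x * indicator {..real n} x)"
      by (intro antisym SUP_upper2[of n] SUP_least) (auto simp: indicator_def)
  qed
  also have "\<dots> = (SUP n. \<integral>\<^sup>+x. f x * indicator {..real n} x \<partial>M)"
    by (rule nn_integral_monotone_convergence_SUP)
       (auto simp: incseq_def le_fun_def indicator_def)
  finally have "(\<integral>\<^sup>+x. f x \<partial>M) = (SUP n. \<integral>\<^sup>+x. f x * indicator {..real n} x \<partial>M)" .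
  with assms(3) show ?thesis
    by (auto simp: less_SUP_iff)
qed

lemma Liminf_le_ereal_if_frequently:
  fixes f :: "'a \<Rightarrow> ereal"
  assumes "\<And>c. b < c \<Longrightarrow> \<exists>\<^sub>F x in F. f x \<le> ereal c"
  shows "Liminf F f \<le> ereal b"
proof (rule ccontr)
  assume "\<not> ?thesis"
  then have "ereal b < Liminf F f"
    by simp
  then obtain c where "ereal b < ereal c" "ereal c < Liminf F f"
    using ereal_dense2 by blast
  from less_LiminfD[OF this(2)] have "\<forall>\<^sub>F x in F. \<not> f x \<le> ereal c"
    by (rule eventually_mono) simp
  moreover have "\<exists>\<^sub>F x in F. f x \<le> ereal c"
    using assms \<open>ereal b < ereal c\<close> by simp
  ultimately show False
    by (simp add: not_frequently[symmetric])
qed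

lemma Limsup_ge_ereal_if_frequently:
  fixes f :: "'a \<Rightarrow> ereal"
  assumes "\<And>c. c < b \<Longrightarrow> \<exists>\<^sub>F x in F. ereal c \<le> f x"
  shows "ereal b \<le> Limsup F f"
proof (rule ccontr)
  assume "\<not> ?thesis"
  then have "Limsup F f < ereal b"
    by simp
  then obtain c where "Limsup F f < ereal c" "ereal c < ereal b"
    using ereal_dense2 by blast
  from Limsup_lessD[OF this(1)] have "\<forall>\<^sub>F x in F. \<not> ereal c \<le> f x"
    by (rule eventually_mono) simp
  moreover have "\<exists>\<^sub>F x in F. ereal c \<le> f x"
    using assms \<open>ereal c < ereal b\<close> by simp
  ultimately show False
    by (simp add: not_frequently[symmetric])
qed

section \<open>The lower bound for the limit superior\<close>

(* For g >= 0 this is the positive part of e^(g r) - e^(g a). *)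
definition exp_excess :: "real \<Rightarrow> real \<Rightarrow> real \<Rightarrow> real" where
  "exp_excess g a r = exp (g * r) - exp (g * min r a)"

lemma exp_excess_nonneg: "0 \<le> g \<Longrightarrow> 0 \<le> exp_excess g a r"
  unfolding exp_excess_def by (simp add: mult_left_mono)

lemma exp_excess_eq_0: "r \<le> a \<Longrightarrow> exp_excess g a r = 0"
  unfolding exp_excess_def by simp

lemma exp_excess_shift:
  assumes "0 \<le> g" "0 \<le> x"
  shows "exp (g * x) * exp_excess g a y \<le> exp_excess g a (x + y)"
proof -
  have "g * min (x + y) a \<le> g * x + g * min y a"
    using assms by (simp add: mult_left_mono flip: distrib_left)
  then show ?thesis
    unfolding exp_excess_def by (simp add: right_diff_distrib distrib_left flip: exp_add)
qed

lemma nn_integral_exp_excess: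
  assumes "0 \<le> g"
  shows "(\<integral>\<^sup>+u. ennreal (g * exp (g * u) * indicator {a..} u) * indicator {..<s} u \<partial>lborel)
       = ennreal (exp_excess g a s)"
proof (rule nn_integral_lessThan_FTC[where S="{a}" and a=a])
  show "continuous_on UNIV (exp_excess g a)"
    unfolding exp_excess_def by (intro continuous_intros)
  fix u :: real
  assume "u \<notin> {a}"
  then show "(exp_excess g a has_real_derivative g * exp (g * u) * indicator {a..} u) (at u)"
    unfolding exp_excess_def
    by (auto intro!: derivative_eq_intros has_real_derivative_min_const simp: indicator_def)
qed (use assms in \<open>auto simp: exp_excess_eq_0\<close>)

lemma nn_integral_exp_excess_pos_finite:
  fixes F :: "real measure"
  assumes "real_distribution F" "\<And>x. 0 < tail F x" "0 < g" "mgf F g < \<infinity>"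
  shows "0 < (\<integral>\<^sup>+s. ennreal (exp_excess g a s) \<partial>F)" "(\<integral>\<^sup>+s. ennreal (exp_excess g a s) \<partial>F) < \<infinity>"
proof -
  interpret real_distribution F by fact
  have "0 < ennreal (exp_excess g a (a + 1)) * emeasure F {a + 1<..}"
    using \<open>0 < g\<close> assms(2)[of "a + 1"]
    by (simp add: ennreal_zero_less_mult_iff exp_excess_def tail_def emeasure_eq_measure)
  also have "\<dots> \<le> (\<integral>\<^sup>+s. ennreal (exp_excess g a s) \<partial>F)"
  proof (subst nn_integral_cmult_indicator[symmetric], simp, intro nn_integral_mono)
    fix s
    have "exp_excess g a (a + 1) \<le> exp_excess g a s" if "a + 1 < s"
      using that \<open>0 < g\<close> by (simp add: exp_excess_def)
    then show "ennreal (exp_excess g a (a + 1)) * indicator {a + 1<..} s \<le> ennreal (exp_excess g a s)"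
      by (auto simp: indicator_def intro: ennreal_leI)
  qed
  finally show "0 < (\<integral>\<^sup>+s. ennreal (exp_excess g a s) \<partial>F)" .
  have "(\<integral>\<^sup>+s. ennreal (exp_excess g a s) \<partial>F) \<le> mgf F g"
    unfolding mgf_def exp_excess_def by (intro nn_integral_mono ennreal_leI) simp
  then show "(\<integral>\<^sup>+s. ennreal (exp_excess g a s) \<partial>F) < \<infinity>"
    using \<open>mgf F g < \<infinity>\<close> by (rule le_less_trans)
qed

lemma nn_integral_convolution_exp_excess_le:
  fixes F :: "real measure"
  assumes "real_distribution F" "0 \<le> g" "0 \<le> c"
    and tails: "\<And>u. a \<le> u \<Longrightarrow> tail (F \<star> F) u \<le> c * tail F u"
  shows "(\<integral>\<^sup>+s. ennreal (exp_excess g a s) \<partial>(F \<star> F)) \<le> ennreal c * (\<integral>\<^sup>+s. ennreal (exp_excess g a s) \<partial>F)"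
proof -
  interpret real_distribution F by fact
  interpret FF: real_distribution "F \<star> F"
    by (intro real_distribution_convolution assms(1))
  have "1 * (\<integral>\<^sup>+s. ennreal (exp_excess g a s) \<partial>(F \<star> F))
      \<le> 1 * ennreal (exp_excess g a a) + ennreal c * (\<integral>\<^sup>+s. ennreal (exp_excess g a s) \<partial>F)"
  proof (rule nn_integral_weighted_tail_le[where w="\<lambda>u. ennreal (g * exp (g * u) * indicator {a..} u)"])
    show "(\<integral>\<^sup>+u. ennreal (g * exp (g * u) * indicator {a..} u) * indicator {..<s} u \<partial>lborel)
        = ennreal (exp_excess g a s)" for s
      using \<open>0 \<le> g\<close> by (rule nn_integral_exp_excess)
    show "1 * emeasure (F \<star> F) {u<..} \<le> ennreal c * emeasure F {u<..}" if "a \<le> u" for u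
      using scaled_tail_le_imp_emeasure_le[of "F \<star> F" F 1 c] tails[OF that] \<open>0 \<le> c\<close>
      by (simp add: FF.finite_measure_axioms finite_measure_axioms)
  qed (auto simp: finite_measure_axioms FF.prob_space_axioms prob_space_imp_subprob_space)
  then show ?thesis
    by (simp add: exp_excess_eq_0)
qed

lemma nn_integral_convolution_exp_excess_ge:
  fixes F :: "real measure"
  assumes "real_distribution F" "AE x in F. 0 \<le> x" "0 \<le> g" "A \<le> a"
  shows "2 * ((\<integral>\<^sup>+x. ennreal (exp (g * x)) * indicator {..A} x \<partial>F) * (\<integral>\<^sup>+s. ennreal (exp_excess g a s) \<partial>F))
    \<le> (\<integral>\<^sup>+s. ennreal (exp_excess g a s) \<partial>(F \<star> F))"
proof (rule nn_integral_convolution_ge_superadditive)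
  interpret real_distribution F by fact
  show "finite_measure F" "sets F = sets borel"
    by (simp_all add: finite_measure_axioms)
  fix x y :: real
  assume "0 \<le> x" "0 \<le> y"
  have shift: "ennreal (exp (g * s)) * ennreal (exp_excess g a t) \<le> ennreal (exp_excess g a (s + t))"
    if "0 \<le> s" for s t
    using exp_excess_shift[of g s a t] \<open>0 \<le> g\<close> that
    by (simp add: ennreal_mult'[symmetric] exp_excess_nonneg)
  have "exp_excess g a r = 0" if "r \<le> A" for r
    using that \<open>A \<le> a\<close> by (simp add: exp_excess_eq_0)
  then show "ennreal (exp (g * x)) * indicator {..A} x * ennreal (exp_excess g a y)
      + ennreal (exp (g * y)) * indicator {..A} y * ennreal (exp_excess g a x)
      \<le> ennreal (exp_excess g a (x + y))"
    using shift[OF \<open>0 \<le> x\<close>, of y] shift[OF \<open>0 \<le> y\<close>, of x]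
    by (cases "x \<le> A"; cases "y \<le> A") (simp_all add: add.commute)
qed (use assms in \<open>simp_all add: exp_excess_def\<close>)

lemma frequently_tail_convolution_ge:
  fixes F :: "real measure" and g \<phi> c :: real
  assumes "real_distribution F" and nonneg: "AE x in F. 0 \<le> x" and tail_pos: "\<And>x. 0 < tail F x"
    and "0 < g" and mgf: "mgf F g = ennreal \<phi>" and "c < 2 * \<phi>"
  shows "\<exists>\<^sub>F u in at_top. c * tail F u \<le> tail (F \<star> F) u"
proof (rule ccontr)
  interpret real_distribution F by fact
  assume "\<not> ?thesis"
  then obtain x0 where x0: "\<And>u. x0 \<le> u \<Longrightarrow> tail (F \<star> F) u < c * tail F u"
    by (auto simp: not_frequently not_le eventually_at_top_linorder)
  have "0 < c * tail F x0"
    using x0[of x0] measure_nonneg[of "F \<star> F" "{x0<..}"] unfolding tail_def by linarith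
  then have "0 < c"
    using tail_pos[of x0] by (simp add: zero_less_mult_iff)
  have "ennreal (c / 2) < (\<integral>\<^sup>+x. ennreal (exp (g * x)) \<partial>F)"
    using \<open>c < 2 * \<phi>\<close> \<open>0 < c\<close> mgf by (simp add: mgf_def ennreal_less_iff)
  then obtain A where A: "ennreal (c / 2) < (\<integral>\<^sup>+x. ennreal (exp (g * x)) * indicator {..A} x \<partial>F)"
    using ex_less_nn_integral_indicator_atMost[OF events_eq_borel] by fastforce
  define a where "a = max x0 A"
  define D where "D = (\<integral>\<^sup>+s. ennreal (exp_excess g a s) \<partial>F)"
  have "0 < D" "D < \<infinity>"
    using nn_integral_exp_excess_pos_finite[OF assms(1) tail_pos \<open>0 < g\<close>] mgf by (simp_all add: D_def)
  have "2 * ((\<integral>\<^sup>+x. ennreal (exp (g * x)) * indicator {..A} x \<partial>F) * D)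
      \<le> (\<integral>\<^sup>+s. ennreal (exp_excess g a s) \<partial>(F \<star> F))"
    unfolding D_def using \<open>0 < g\<close>
    by (intro nn_integral_convolution_exp_excess_ge[OF assms(1) nonneg]) (simp_all add: a_def)
  also have "\<dots> \<le> ennreal c * D"
    unfolding D_def using assms(1) \<open>0 < g\<close> \<open>0 < c\<close> x0
    by (intro nn_integral_convolution_exp_excess_le) (auto simp: a_def less_imp_le)
  also have "\<dots> = 2 * (ennreal (c / 2) * D)"
    using \<open>0 < c\<close> ennreal_mult[of 2 "c / 2"] by (simp add: mult.assoc)
  also have "\<dots> < 2 * ((\<integral>\<^sup>+x. ennreal (exp (g * x)) * indicator {..A} x \<partial>F) * D)"
    using A \<open>0 < D\<close> \<open>D < \<infinity>\<close>
    by (intro ennreal_mult_strict_left_mono ennreal_mult_strict_right_mono) auto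
  finally show False
    by simp
qed

lemma Limsup_tail_convolution_ratio_ge:
  fixes F :: "real measure" and g \<phi> :: real
  assumes "real_distribution F" "AE x in F. 0 \<le> x" "\<And>x. 0 < tail F x"
    and "0 < g" "mgf F g = ennreal \<phi>"
  shows "ereal (2 * \<phi>) \<le> Limsup at_top (\<lambda>x. ereal (tail (F \<star> F) x / tail F x))"
proof (rule Limsup_ge_ereal_if_frequently)
  fix c
  assume "c < 2 * \<phi>"
  then have "\<exists>\<^sub>F u in at_top. c * tail F u \<le> tail (F \<star> F) u"
    by (intro frequently_tail_convolution_ge[OF assms])
  then show "\<exists>\<^sub>F x in at_top. ereal c \<le> ereal (tail (F \<star> F) x / tail F x)"
    by (elim frequently_elim1) (simp add: pos_le_divide_eq assms(3))
qed

section \<open>The upper bound for the limit inferior\<close>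

(* A submultiplicative stand-in for e^((g + l) s), whose F-moments are finite and increase to
   phi(g + l) as T grows. *)
definition capped_tilt_exp :: "real \<Rightarrow> real \<Rightarrow> real \<Rightarrow> real \<Rightarrow> real" where
  "capped_tilt_exp g l T s = exp (g * s + l * max 0 (min s T))"

lemma capped_tilt_exp_submult:
  assumes "0 \<le> l" "0 \<le> T"
  shows "capped_tilt_exp g l T (x + y) \<le> capped_tilt_exp g l T x * capped_tilt_exp g l T y"
proof -
  have "max 0 (min (x + y) T) \<le> max 0 (min x T) + max 0 (min y T)"
    using assms by auto
  then have "l * max 0 (min (x + y) T) \<le> l * max 0 (min x T) + l * max 0 (min y T)"
    using assms by (simp add: mult_left_mono flip: distrib_left)
  then show ?thesis
    unfolding capped_tilt_exp_def by (simp add: distrib_left flip: exp_add)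
qed

lemma exp_le_capped_tilt_exp: "0 \<le> l \<Longrightarrow> exp (g * s) \<le> capped_tilt_exp g l T s"
  unfolding capped_tilt_exp_def by simp

lemma capped_tilt_exp_le_shift:
  "0 \<le> l \<Longrightarrow> 0 \<le> h \<Longrightarrow> capped_tilt_exp g l (T + h) s \<le> exp (l * h) * capped_tilt_exp g l T s"
  unfolding capped_tilt_exp_def by (simp add: mult_left_mono flip: exp_add distrib_left)

lemma capped_tilt_exp_mono:
  "0 \<le> l \<Longrightarrow> T \<le> T' \<Longrightarrow> capped_tilt_exp g l T s \<le> capped_tilt_exp g l T' s"
  unfolding capped_tilt_exp_def by (simp add: mult_left_mono)

lemma nn_integral_capped_tilt_exp:
  assumes "0 \<le> g" "0 \<le> l" "0 \<le> T"
  shows "(\<integral>\<^sup>+u. ennreal (capped_tilt_exp g l T u * (g + l * indicator {0<..<T} u) - g * exp (g * u))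
            * indicator {..<s} u \<partial>lborel)
       = ennreal (capped_tilt_exp g l T s - exp (g * s))"
proof (rule nn_integral_lessThan_FTC[where S="{0, T}" and a=0])
  have capped_eq: "capped_tilt_exp g l T = (\<lambda>s. exp (g * s + l * (min s T - min s 0)))"
    using assms by (auto simp: capped_tilt_exp_def fun_eq_iff)
  show "continuous_on UNIV (\<lambda>s. capped_tilt_exp g l T s - exp (g * s))"
    unfolding capped_eq by (intro continuous_intros)
  fix u :: real
  assume "u \<notin> {0, T}"
  then have "((\<lambda>s. exp (g * s + l * (min s T - min s 0)) - exp (g * s)) has_real_derivative
      exp (g * u + l * (min u T - min u 0)) * (g + l * ((if u < T then 1 else 0) - (if u < 0 then 1 else 0)))
      - g * exp (g * u)) (at u)"
    by (auto intro!: derivative_eq_intros has_real_derivative_min_const)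
  moreover have "(if u < T then 1 else 0) - (if u < 0 then 1 else 0) = (indicator {0<..<T} u :: real)"
    using \<open>u \<notin> {0, T}\<close> assms by (auto simp: indicator_def)
  ultimately show "((\<lambda>s. capped_tilt_exp g l T s - exp (g * s)) has_real_derivative
      capped_tilt_exp g l T u * (g + l * indicator {0<..<T} u) - g * exp (g * u)) (at u)"
    unfolding capped_eq by simp
next
  fix u :: real
  have "g * exp (g * u) \<le> g * capped_tilt_exp g l T u"
    using assms exp_le_capped_tilt_exp by (simp add: mult_left_mono)
  also have "\<dots> \<le> capped_tilt_exp g l T u * (g + l * indicator {0<..<T} u)"
    using assms by (simp add: algebra_simps capped_tilt_exp_def)
  finally show "0 \<le> capped_tilt_exp g l T u * (g + l * indicator {0<..<T} u) - g * exp (g * u)"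
    by simp
qed (auto simp: capped_tilt_exp_def)

lemma nn_integral_capped_tilt_exp_excess:
  fixes M :: "real measure"
  assumes [measurable_cong]: "sets M = sets borel" and "0 \<le> l"
  shows "(\<integral>\<^sup>+s. ennreal (capped_tilt_exp g l T s - exp (g * s)) \<partial>M) + mgf M g
       = (\<integral>\<^sup>+s. ennreal (capped_tilt_exp g l T s) \<partial>M)"
proof -
  have "ennreal (capped_tilt_exp g l T s - exp (g * s)) + ennreal (exp (g * s))
      = ennreal (capped_tilt_exp g l T s)" for s
    using exp_le_capped_tilt_exp[OF \<open>0 \<le> l\<close>] by (simp flip: ennreal_plus)
  then show ?thesis
    unfolding mgf_def by (simp add: capped_tilt_exp_def flip: nn_integral_add)
qed

lemma nn_integral_convolution_capped_tilt_exp_le: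
  fixes M :: "real measure"
  assumes "finite_measure M" "sets M = sets borel" "0 \<le> l" "0 \<le> T"
  shows "(\<integral>\<^sup>+s. ennreal (capped_tilt_exp g l T s) \<partial>(M \<star> M))
       \<le> (\<integral>\<^sup>+s. ennreal (capped_tilt_exp g l T s) \<partial>M) * (\<integral>\<^sup>+s. ennreal (capped_tilt_exp g l T s) \<partial>M)"
proof (rule nn_integral_convolution_le_submultiplicative[OF assms(1,1,2,2)])
  show "ennreal (capped_tilt_exp g l T (x + y))
      \<le> ennreal (capped_tilt_exp g l T x) * ennreal (capped_tilt_exp g l T y)" for x y
    using capped_tilt_exp_submult[OF assms(3,4), of g x y]
    by (simp add: capped_tilt_exp_def ennreal_leI flip: ennreal_mult')
qed (simp add: capped_tilt_exp_def)

lemma nn_integral_capped_tilt_exp_shift_le: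
  fixes M :: "real measure"
  assumes [measurable_cong]: "sets M = sets borel" and "0 \<le> l" "0 \<le> h"
  shows "(\<integral>\<^sup>+s. ennreal (capped_tilt_exp g l (T + h) s) \<partial>M)
       \<le> ennreal (exp (l * h)) * (\<integral>\<^sup>+s. ennreal (capped_tilt_exp g l T s) \<partial>M)"
proof -
  have "(\<integral>\<^sup>+s. ennreal (capped_tilt_exp g l (T + h) s) \<partial>M)
      \<le> (\<integral>\<^sup>+s. ennreal (exp (l * h)) * ennreal (capped_tilt_exp g l T s) \<partial>M)"
    using capped_tilt_exp_le_shift[OF assms(2,3)]
    by (intro nn_integral_mono) (simp add: ennreal_mult'[symmetric] ennreal_leI)
  also have "\<dots> = ennreal (exp (l * h)) * (\<integral>\<^sup>+s. ennreal (capped_tilt_exp g l T s) \<partial>M)"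
    by (rule nn_integral_cmult) (simp add: capped_tilt_exp_def)
  finally show ?thesis .
qed

lemma SUP_nn_integral_capped_tilt_exp:
  fixes F :: "real measure"
  assumes [measurable_cong]: "sets F = sets borel" and "0 < l" "0 < h" "mgf F (g + l) = \<infinity>"
  shows "(SUP k. \<integral>\<^sup>+s. ennreal (capped_tilt_exp g l (real k * h) s) \<partial>F) = \<infinity>"
proof -
  have "\<infinity> = (\<integral>\<^sup>+s. ennreal (exp ((g + l) * s)) \<partial>F)"
    using \<open>mgf F (g + l) = \<infinity>\<close> by (simp add: mgf_def)
  also have "\<dots> \<le> (\<integral>\<^sup>+s. (SUP k. ennreal (capped_tilt_exp g l (real k * h) s)) \<partial>F)"
  proof (intro nn_integral_mono)
    fix s :: real
    obtain k :: nat where "s / h \<le> real k"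
      using real_arch_simple by blast
    then have "s \<le> real k * h"
      using \<open>0 < h\<close> by (simp add: field_simps)
    then have "l * s \<le> l * max 0 (min s (real k * h))"
      using \<open>0 < l\<close> by (intro mult_left_mono) auto
    then have "exp ((g + l) * s) \<le> capped_tilt_exp g l (real k * h) s"
      by (simp add: capped_tilt_exp_def distrib_right)
    then show "ennreal (exp ((g + l) * s)) \<le> (SUP k. ennreal (capped_tilt_exp g l (real k * h) s))"
      by (intro SUP_upper2[of k] ennreal_leI) auto
  qed
  also have "\<dots> = (SUP k. \<integral>\<^sup>+s. ennreal (capped_tilt_exp g l (real k * h) s) \<partial>F)"
  proof (rule nn_integral_monotone_convergence_SUP)
    show "incseq (\<lambda>k s. ennreal (capped_tilt_exp g l (real k * h) s))"
      using \<open>0 < l\<close> \<open>0 < h\<close>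
      by (intro incseq_SucI le_funI ennreal_leI capped_tilt_exp_mono) (auto simp: distrib_right)
  qed (simp add: capped_tilt_exp_def)
  finally show ?thesis
    by (simp add: top_unique)
qed

lemma ex_crossing_le_mult:
  fixes a :: "nat \<Rightarrow> ennreal"
  assumes "a 0 < y" and step: "\<And>k. a (Suc k) \<le> q * a k" and "\<exists>k. y \<le> a k"
  shows "\<exists>k. y \<le> a k \<and> a k \<le> q * y"
proof -
  define k where "k = (LEAST k. y \<le> a k)"
  have "y \<le> a k"
    unfolding k_def using assms(3) by (rule LeastI_ex)
  have "k \<noteq> 0"
  proof
    assume "k = 0"
    with \<open>y \<le> a k\<close> \<open>a 0 < y\<close> show False
      by simp
  qed
  have "\<not> y \<le> a (k - 1)"
    unfolding k_def by (rule not_less_Least) (use \<open>k \<noteq> 0\<close> k_def in simp)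
  have "a k \<le> q * a (k - 1)"
    using step[of "k - 1"] \<open>k \<noteq> 0\<close> by simp
  also have "\<dots> \<le> q * y"
    using \<open>\<not> y \<le> a (k - 1)\<close> by (intro mult_left_mono) auto
  finally show ?thesis
    using \<open>y \<le> a k\<close> by blast
qed

lemma ex_capped_tilt_moment_between:
  fixes F :: "real measure" and g l lo hi :: real
  assumes [measurable_cong]: "sets F = sets borel"
    and "0 < l" and "mgf F g < ennreal lo" and "lo < hi" and "mgf F (g + l) = \<infinity>"
  shows "\<exists>T A. 0 \<le> T \<and> (\<integral>\<^sup>+s. ennreal (capped_tilt_exp g l T s) \<partial>F) = ennreal A \<and> lo \<le> A \<and> A \<le> hi"
proof -
  have "0 < ennreal lo"
    using \<open>mgf F g < ennreal lo\<close> by (rule le_less_trans[OF zero_le])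
  then have "0 < lo"
    by simp
  define h where "h = ln (hi / lo) / l"
  have "0 < h" and exp_lh: "exp (l * h) = hi / lo"
    using \<open>0 < l\<close> \<open>0 < lo\<close> \<open>lo < hi\<close> by (auto simp: h_def)
  define a where "a k = (\<integral>\<^sup>+s. ennreal (capped_tilt_exp g l (real k * h) s) \<partial>F)" for k
  have "a 0 < ennreal lo"
    using \<open>mgf F g < ennreal lo\<close> by (simp add: a_def capped_tilt_exp_def mgf_def)
  moreover have "a (Suc k) \<le> ennreal (exp (l * h)) * a k" for k
    using nn_integral_capped_tilt_exp_shift_le[OF assms(1), of l h g "real k * h"] \<open>0 < l\<close> \<open>0 < h\<close>
    by (simp add: a_def distrib_right add.commute)
  moreover have "\<exists>k. ennreal lo \<le> a k"
  proof -
    have "ennreal lo < (SUP k. a k)"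
      unfolding a_def SUP_nn_integral_capped_tilt_exp[OF assms(1,2) \<open>0 < h\<close> assms(5)] by simp
    then show ?thesis
      by (auto simp: less_SUP_iff intro: less_imp_le)
  qed
  ultimately obtain k where "ennreal lo \<le> a k" "a k \<le> ennreal (exp (l * h)) * ennreal lo"
    using ex_crossing_le_mult[of a "ennreal lo" "ennreal (exp (l * h))"] by blast
  moreover have "ennreal (exp (l * h)) * ennreal lo = ennreal hi"
    using \<open>0 < lo\<close> \<open>lo < hi\<close> ennreal_mult[of "hi / lo" lo] by (simp add: exp_lh)
  ultimately have "ennreal lo \<le> a k" "a k \<le> ennreal hi"
    by simp_all
  then obtain A where "a k = ennreal A" "0 \<le> A"
    by (cases "a k") (auto simp: top_unique)
  with \<open>ennreal lo \<le> a k\<close> \<open>a k \<le> ennreal hi\<close> \<open>0 < lo\<close> \<open>lo < hi\<close> have "lo \<le> A" "A \<le> hi"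
    by (simp_all add: ennreal_le_iff)
  with \<open>a k = ennreal A\<close> \<open>0 < h\<close> show ?thesis
    unfolding a_def by (intro exI[of _ "real k * h"] exI[of _ A]) auto
qed

lemma capped_tilt_moment_inequality:
  fixes F :: "real measure" and g l T c \<phi> A x0 :: real
  assumes "real_distribution F" "0 \<le> g" "0 \<le> l" "0 \<le> T" "0 \<le> c" "0 \<le> \<phi>" "0 \<le> A"
    and mgf: "mgf F g = ennreal \<phi>"
    and moment: "(\<integral>\<^sup>+s. ennreal (capped_tilt_exp g l T s) \<partial>F) = ennreal A"
    and tails: "\<And>u. x0 \<le> u \<Longrightarrow> c * tail F u \<le> tail (F \<star> F) u"
  shows "c * A + \<phi>\<^sup>2 \<le> c * (capped_tilt_exp g l T x0 - exp (g * x0)) + c * \<phi> + A\<^sup>2"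
proof -
  interpret real_distribution F by fact
  interpret FF: real_distribution "F \<star> F"
    by (intro real_distribution_convolution assms(1))
  define W where "W s = ennreal (capped_tilt_exp g l T s - exp (g * s))" for s
  let ?I1 = "\<integral>\<^sup>+s. W s \<partial>F" and ?I2 = "\<integral>\<^sup>+s. W s \<partial>(F \<star> F)"
  have I1: "?I1 + ennreal \<phi> = ennreal A"
    using nn_integral_capped_tilt_exp_excess[OF events_eq_borel \<open>0 \<le> l\<close>, of g T]
    by (simp add: W_def mgf moment)
  have "?I2 + ennreal \<phi> * ennreal \<phi> = (\<integral>\<^sup>+s. ennreal (capped_tilt_exp g l T s) \<partial>(F \<star> F))"
    using nn_integral_capped_tilt_exp_excess[OF FF.events_eq_borel \<open>0 \<le> l\<close>, of g T]
      mgf_convolution[OF finite_measure_axioms finite_measure_axioms events_eq_borel events_eq_borel]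
    by (simp add: W_def mgf)
  also have "\<dots> \<le> ennreal A * ennreal A"
    using nn_integral_convolution_capped_tilt_exp_le[OF finite_measure_axioms events_eq_borel \<open>0 \<le> l\<close> \<open>0 \<le> T\<close>, of g]
    by (simp add: moment)
  moreover have "ennreal c * ?I1 \<le> ennreal c * W x0 + 1 * ?I2"
  proof (rule nn_integral_weighted_tail_le)
    show "(\<integral>\<^sup>+u. ennreal (capped_tilt_exp g l T u * (g + l * indicator {0<..<T} u) - g * exp (g * u))
            * indicator {..<s} u \<partial>lborel) = W s" for s
      unfolding W_def using assms(2-4) by (rule nn_integral_capped_tilt_exp)
    show "ennreal c * emeasure F {u<..} \<le> 1 * emeasure (F \<star> F) {u<..}" if "x0 \<le> u" for u
      using scaled_tail_le_imp_emeasure_le[of F "F \<star> F" c 1] tails[OF that] \<open>0 \<le> c\<close>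
      by (simp add: FF.finite_measure_axioms finite_measure_axioms)
  qed (auto simp: FF.finite_measure_axioms prob_space_axioms prob_space_imp_subprob_space capped_tilt_exp_def)
  then have "ennreal c * ?I1 + ennreal c * ennreal \<phi> + ennreal \<phi> * ennreal \<phi>
      \<le> ennreal c * W x0 + ennreal c * ennreal \<phi> + (?I2 + ennreal \<phi> * ennreal \<phi>)"
    by (simp add: add_right_mono ac_simps)
  ultimately have "ennreal c * (?I1 + ennreal \<phi>) + ennreal \<phi> * ennreal \<phi>
      \<le> ennreal c * W x0 + ennreal c * ennreal \<phi> + ennreal A * ennreal A"
    by (simp add: distrib_left) (meson add_left_mono order_trans)
  then have "ennreal (c * A + \<phi>\<^sup>2) \<le> ennreal (c * (capped_tilt_exp g l T x0 - exp (g * x0)) + c * \<phi> + A\<^sup>2)"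
    unfolding I1 using assms(5-7) exp_le_capped_tilt_exp[OF \<open>0 \<le> l\<close>, of g x0]
    by (simp add: W_def power2_eq_square ennreal_mult)
  then show ?thesis
    using exp_le_capped_tilt_exp[OF \<open>0 \<le> l\<close>, of g x0] assms(5-7)
    by (subst ennreal_le_iff[symmetric]) simp_all
qed

lemma ex_pos_mult_exp_minus_one_less:
  fixes C x \<epsilon> :: real
  assumes "0 < \<epsilon>"
  shows "\<exists>l>0. C * (exp (l * x) - 1) < \<epsilon>"
proof -
  have "((\<lambda>l. C * (exp (l * x) - 1)) \<longlongrightarrow> 0) (at_right 0)"
    by (auto intro!: tendsto_eq_intros)
  then have "\<forall>\<^sub>F l in at_right 0. C * (exp (l * x) - 1) < \<epsilon>"
    using assms by (rule order_tendstoD(2))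
  then obtain b where "0 < b" and b: "\<And>l. 0 < l \<Longrightarrow> l < b \<Longrightarrow> C * (exp (l * x) - 1) < \<epsilon>"
    by (auto simp: eventually_at_right_field)
  then show ?thesis
    using b[of "b / 2"] by (intro exI[of _ "b / 2"]) auto
qed

lemma window_product_ge:
  fixes d t :: real
  assumes "d / 4 \<le> t" "t \<le> 3 * d / 4"
  shows "3 * d\<^sup>2 / 16 \<le> t * (d - t)"
proof -
  have "0 \<le> (t - d / 4) * (3 * d / 4 - t)"
    using assms by simp
  also have "\<dots> = t * (d - t) - 3 * d\<^sup>2 / 16"
    by (simp add: power2_eq_square field_simps)
  finally show ?thesis
    by simp
qed

lemma frequently_tail_convolution_le:
  fixes F :: "real measure" and g \<phi> c :: real
  assumes "real_distribution F" "0 < g" and mgf: "mgf F g = ennreal \<phi>" and "0 \<le> \<phi>"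
    and beyond: "\<And>l. 0 < l \<Longrightarrow> mgf F (g + l) = \<infinity>" and "2 * \<phi> < c"
  shows "\<exists>\<^sub>F u in at_top. tail (F \<star> F) u \<le> c * tail F u"
proof (rule ccontr)
  interpret real_distribution F by fact
  assume "\<not> ?thesis"
  then obtain N where N: "\<And>u. N \<le> u \<Longrightarrow> c * tail F u < tail (F \<star> F) u"
    by (auto simp: not_frequently not_le eventually_at_top_linorder)
  define x0 where "x0 = max N 0"
  define d where "d = c - 2 * \<phi>"
  have "0 < d" "0 \<le> c" "0 \<le> x0"
    using \<open>2 * \<phi> < c\<close> \<open>0 \<le> \<phi>\<close> by (auto simp: d_def x0_def)
  then obtain l where "0 < l" and small: "c * exp (g * x0) * (exp (l * x0) - 1) < 3 * d\<^sup>2 / 16"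
    using ex_pos_mult_exp_minus_one_less[of "3 * d\<^sup>2 / 16" "c * exp (g * x0)" x0] by auto
  obtain T A where "0 \<le> T" and moment: "(\<integral>\<^sup>+s. ennreal (capped_tilt_exp g l T s) \<partial>F) = ennreal A"
    and "\<phi> + d / 4 \<le> A" "A \<le> \<phi> + 3 * d / 4"
    using ex_capped_tilt_moment_between[OF events_eq_borel \<open>0 < l\<close>, of g "\<phi> + d / 4" "\<phi> + 3 * d / 4"]
      mgf beyond[OF \<open>0 < l\<close>] \<open>0 < d\<close> \<open>0 \<le> \<phi>\<close> by (auto simp: ennreal_less_iff)
  have "0 \<le> A"
    using \<open>\<phi> + d / 4 \<le> A\<close> \<open>0 < d\<close> \<open>0 \<le> \<phi>\<close> by linarith
  have key: "c * A + \<phi>\<^sup>2 \<le> c * (capped_tilt_exp g l T x0 - exp (g * x0)) + c * \<phi> + A\<^sup>2"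
    using \<open>0 < g\<close> \<open>0 < l\<close> N
    by (intro capped_tilt_moment_inequality[OF assms(1) _ _ \<open>0 \<le> T\<close> \<open>0 \<le> c\<close> \<open>0 \<le> \<phi>\<close> \<open>0 \<le> A\<close> mgf moment])
       (auto simp: x0_def less_imp_le)
  have "3 * d\<^sup>2 / 16 \<le> (A - \<phi>) * (d - (A - \<phi>))"
    using \<open>\<phi> + d / 4 \<le> A\<close> \<open>A \<le> \<phi> + 3 * d / 4\<close>
    by (intro window_product_ge) auto
  also have "\<dots> = c * A + \<phi>\<^sup>2 - c * \<phi> - A\<^sup>2"
    by (simp add: d_def power2_eq_square algebra_simps)
  also have "\<dots> \<le> c * (capped_tilt_exp g l T x0 - exp (g * x0))"
    using key by linarith
  also have "\<dots> \<le> c * exp (g * x0) * (exp (l * x0) - 1)"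
  proof -
    have "capped_tilt_exp g l T x0 - exp (g * x0) \<le> exp (g * x0) * (exp (l * x0) - 1)"
      using \<open>0 < l\<close> \<open>0 \<le> x0\<close> mult_left_mono[of "max 0 (min x0 T)" x0 l]
      by (simp add: capped_tilt_exp_def right_diff_distrib exp_add)
    from mult_left_mono[OF this \<open>0 \<le> c\<close>] show ?thesis
      by (simp add: mult.assoc)
  qed
  finally show False
    using small by simp
qed

lemma Liminf_tail_convolution_ratio_le:
  fixes F :: "real measure" and g \<phi> :: real
  assumes "real_distribution F" "\<And>x. 0 < tail F x" "0 < g" "mgf F g = ennreal \<phi>" "0 \<le> \<phi>"
    and "\<And>l. 0 < l \<Longrightarrow> mgf F (g + l) = \<infinity>"
  shows "Liminf at_top (\<lambda>x. ereal (tail (F \<star> F) x / tail F x)) \<le> ereal (2 * \<phi>)"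
proof (rule Liminf_le_ereal_if_frequently)
  fix c
  assume "2 * \<phi> < c"
  then have "\<exists>\<^sub>F u in at_top. tail (F \<star> F) u \<le> c * tail F u"
    by (intro frequently_tail_convolution_le[OF assms(1,3-6)])
  then show "\<exists>\<^sub>F x in at_top. ereal (tail (F \<star> F) x / tail F x) \<le> ereal c"
    by (elim frequently_elim1) (simp add: pos_divide_le_eq assms(2))
qed

lemma mgf_beyond_gamma_hat:
  assumes "gamma_hat F = ereal g" "0 < l"
  shows "mgf F (g + l) = \<infinity>"
proof (rule ccontr)
  assume "mgf F (g + l) \<noteq> \<infinity>"
  then have "ereal (g + l) \<le> gamma_hat F"
    unfolding gamma_hat_def by (intro Sup_upper) (auto simp: less_top)
  with assms show False
    by simp
qed

theorem lemma9:
  fixes F :: "real measure"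
  assumes "prob_space F"
    and "sets F = sets borel"
    and "measure F {..<0} = 0"
    and "\<And>x. tail F x > 0"
    and "0 < gamma_hat F" and "gamma_hat F < \<infinity>"
    and "mgf F (real_of_ereal (gamma_hat F)) < \<infinity>"
  shows "Liminf at_top (\<lambda>x. ereal (tail (F \<star> F) x / tail F x))
           \<le> ereal (2 * enn2real (mgf F (real_of_ereal (gamma_hat F)))) \<and>
         Limsup at_top (\<lambda>x. ereal (tail (F \<star> F) x / tail F x))
           \<ge> ereal (2 * enn2real (mgf F (real_of_ereal (gamma_hat F))))"
proof -
  have F: "real_distribution F"
    using assms(1,2) by (simp add: real_distribution_def real_distribution_axioms_def)
  then interpret real_distribution F .
  define g where "g = real_of_ereal (gamma_hat F)"
  have gamma: "gamma_hat F = ereal g" and "0 < g"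
    using assms(5,6) by (cases "gamma_hat F"; simp add: g_def)+
  define \<phi> where "\<phi> = enn2real (mgf F g)"
  have mgf: "mgf F g = ennreal \<phi>" and "0 \<le> \<phi>"
    using assms(7) by (simp_all add: \<phi>_def g_def less_top)
  have "AE x in F. 0 \<le> x"
    using assms(3) by (intro AE_I[of _ _ "{..<0}"]) (auto simp: emeasure_eq_measure)
  with F assms(4) \<open>0 < g\<close> mgf \<open>0 \<le> \<phi>\<close> mgf_beyond_gamma_hat[OF gamma]
  show ?thesis
    unfolding g_def[symmetric] \<phi>_def[symmetric]
    by (simp add: Liminf_tail_convolution_ratio_le Limsup_tail_convolution_ratio_ge)
qed

end
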